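(* Let $G$ be a block graph with diameter $2$. Then $G$ is $\chi_\rho$-critical if and only if $\delta(G) \geq 2$.
   Context: Graphs are finite and simple. A block of $G$ is a maximal connected subgraph without cut vertices; a block graph is a connected graph in which every block is a complete graph. $\delta(G)$ is the minimum degree. A $k$-packing coloring of $G$ is a map $c:V(G)\to\{1,\ldots,k\}$ such that two distinct vertices $u,v$ with $c(u)=c(v)=i$ satisfy $d_G(u,v)>i$ (distance between vertices in different components is infinite); $\chi_\rho(G)$ is the smallest $k$ for which such a coloring exists. $G$ is $\chi_\rho$-critical if $\chi_\rho(H)<\chi_\rho(G)$ for every proper subgraph $H$ of $G$. *)

theory Defs
  imports Main "HOL-Library.Extended_Nat"
begin

definition graph :: "'a set \<Rightarrow> 'a set set \<Rightarrow> bool" where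
  "graph V E \<longleftrightarrow> finite V \<and> (\<forall>e\<in>E. \<exists>u v. e = {u, v} \<and> u \<noteq> v \<and> u \<in> V \<and> v \<in> V)"

definition adj :: "'a set set \<Rightarrow> 'a \<Rightarrow> 'a \<Rightarrow> bool" where
  "adj E u v \<longleftrightarrow> {u, v} \<in> E \<and> u \<noteq> v"

definition reachable :: "'a set \<Rightarrow> 'a set set \<Rightarrow> 'a \<Rightarrow> 'a \<Rightarrow> bool" where
  "reachable V E u v \<longleftrightarrow> u \<in> V \<and> v \<in> V \<and> (adj E)\<^sup>*\<^sup>* u v"

definition connected_graph :: "'a set \<Rightarrow> 'a set set \<Rightarrow> bool" where
  "connected_graph V E \<longleftrightarrow> V \<noteq> {} \<and> (\<forall>u\<in>V. \<forall>v\<in>V. reachable V E u v)"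

definition subgraph :: "'a set \<Rightarrow> 'a set set \<Rightarrow> 'a set \<Rightarrow> 'a set set \<Rightarrow> bool" where
  "subgraph V' E' V E \<longleftrightarrow> graph V' E' \<and> V' \<subseteq> V \<and> E' \<subseteq> E"

definition proper_subgraph :: "'a set \<Rightarrow> 'a set set \<Rightarrow> 'a set \<Rightarrow> 'a set set \<Rightarrow> bool" where
  "proper_subgraph V' E' V E \<longleftrightarrow> subgraph V' E' V E \<and> (V', E') \<noteq> (V, E)"

definition del_vertex_edges :: "'a set set \<Rightarrow> 'a \<Rightarrow> 'a set set" where
  "del_vertex_edges E v = {e \<in> E. v \<notin> e}"

definition cut_vertex :: "'a set \<Rightarrow> 'a set set \<Rightarrow> 'a \<Rightarrow> bool" where
  "cut_vertex V E v \<longleftrightarrow> v \<in> V \<and>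
     (\<exists>u\<in>V - {v}. \<exists>w\<in>V - {v}. \<not> reachable (V - {v}) (del_vertex_edges E v) u w)"

definition conn_no_cut :: "'a set \<Rightarrow> 'a set set \<Rightarrow> bool" where
  "conn_no_cut V E \<longleftrightarrow> connected_graph V E \<and> (\<forall>v\<in>V. \<not> cut_vertex V E v)"

definition is_block :: "'a set \<Rightarrow> 'a set set \<Rightarrow> 'a set \<Rightarrow> 'a set set \<Rightarrow> bool" where
  "is_block B F V E \<longleftrightarrow> subgraph B F V E \<and> conn_no_cut B F \<and>
     (\<forall>B' F'. subgraph B' F' V E \<and> conn_no_cut B' F' \<and> B \<subseteq> B' \<and> F \<subseteq> F'
        \<longrightarrow> B' = B \<and> F' = F)"

definition complete_graph :: "'a set \<Rightarrow> 'a set set \<Rightarrow> bool" where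
  "complete_graph V E \<longleftrightarrow> (\<forall>u\<in>V. \<forall>v\<in>V. u \<noteq> v \<longrightarrow> {u, v} \<in> E)"

definition block_graph :: "'a set \<Rightarrow> 'a set set \<Rightarrow> bool" where
  "block_graph V E \<longleftrightarrow> graph V E \<and> connected_graph V E \<and>
     (\<forall>B F. is_block B F V E \<longrightarrow> complete_graph B F)"

definition gdist :: "'a set \<Rightarrow> 'a set set \<Rightarrow> 'a \<Rightarrow> 'a \<Rightarrow> enat" where
  "gdist V E u v = (if \<exists>n. (adj E ^^ n) u v then enat (LEAST n. (adj E ^^ n) u v) else \<infinity>)"

definition diameter :: "'a set \<Rightarrow> 'a set set \<Rightarrow> enat" where
  "diameter V E = Sup {gdist V E u v | u v. u \<in> V \<and> v \<in> V}"

definition degree :: "'a set set \<Rightarrow> 'a \<Rightarrow> nat" where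
  "degree E v = card {u. {u, v} \<in> E \<and> u \<noteq> v}"

definition min_degree :: "'a set \<Rightarrow> 'a set set \<Rightarrow> nat" where
  "min_degree V E = Min (degree E ` V)"

definition packing_coloring :: "'a set \<Rightarrow> 'a set set \<Rightarrow> nat \<Rightarrow> ('a \<Rightarrow> nat) \<Rightarrow> bool" where
  "packing_coloring V E k c \<longleftrightarrow> (\<forall>v\<in>V. c v \<in> {1..k}) \<and>
     (\<forall>u\<in>V. \<forall>v\<in>V. u \<noteq> v \<and> c u = c v \<longrightarrow> gdist V E u v > enat (c u))"

definition packing_chromatic :: "'a set \<Rightarrow> 'a set set \<Rightarrow> nat" where
  "packing_chromatic V E = (LEAST k. \<exists>c. packing_coloring V E k c)"

definition packing_critical :: "'a set \<Rightarrow> 'a set set \<Rightarrow> bool" where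
  "packing_critical V E \<longleftrightarrow>
     (\<forall>V' E'. proper_subgraph V' E' V E \<longrightarrow> packing_chromatic V' E' < packing_chromatic V E)"

end

theory Submission
  imports Defs "HOL-Library.Product_Order"
begin

(* A packing colouring of a graph of diameter at most 2 uses every colour other than 1 at most
   once. Hence its packing chromatic number is |V| + 1 - alpha, where alpha is the independence
   number, and an independent set A together with a set B of vertices pairwise at distance
   greater than 2 bounds it by |V| + 2 - |A| - |B|.
   A block graph of diameter 2 has a universal vertex v, all its blocks being cliques through v.
   If a vertex x has degree 1, its only neighbour is v; a maximum independent set of G - x
   extends by x unless it is {v}, so deleting x does not lower the packing chromatic number.
   If the minimum degree is at least 2, every proper subgraph has a smaller packing chromatic
   number: an independent set as large as a maximum one avoids a deleted vertex x after x is
   exchanged for a neighbour other than v; deleting an edge ab with a, b other than v makes both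
   a and b available for an independent set; and deleting an edge va puts a at distance 3 from
   any non-neighbour w of a, so that a and w can share colour 2. *)

definition independent_set :: "'a set set \<Rightarrow> 'a set \<Rightarrow> bool" where
  "independent_set E A \<longleftrightarrow> (\<forall>a\<in>A. \<forall>b\<in>A. \<not> adj E a b)"

definition closed_neighbourhood :: "'a set set \<Rightarrow> 'a \<Rightarrow> 'a set" where
  "closed_neighbourhood E a = {y. y = a \<or> adj E a y}"

lemma adj_commute: "adj E u w \<longleftrightarrow> adj E w u"
  unfolding adj_def by (auto simp: insert_commute)

lemma adj_irrefl [simp]: "\<not> adj E u u"
  unfolding adj_def by simp

lemma adj_in_vertices: "graph V E \<Longrightarrow> adj E u w \<Longrightarrow> u \<in> V \<and> w \<in> V"
  unfolding graph_def adj_def by (fastforce simp: doubleton_eq_iff)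

lemma adj_del_vertex_edges: "adj (del_vertex_edges E x) u w \<longleftrightarrow> adj E u w \<and> u \<noteq> x \<and> w \<noteq> x"
  unfolding adj_def del_vertex_edges_def by auto

lemma adj_Diff_singleton: "adj (E - {e}) u w \<longleftrightarrow> adj E u w \<and> {u, w} \<noteq> e"
  unfolding adj_def by auto

lemma adj_mono: "adj E' u w \<Longrightarrow> E' \<subseteq> E \<Longrightarrow> adj E u w"
  unfolding adj_def by auto

lemma degree_eq_card_adj: "degree E x = card {u. adj E x u}"
  unfolding degree_def adj_def by (metis insert_commute)

lemma independent_set_subset: "independent_set E A \<Longrightarrow> B \<subseteq> A \<Longrightarrow> independent_set E B"
  unfolding independent_set_def by blast

lemma independent_set_mono: "independent_set E A \<Longrightarrow> E' \<subseteq> E \<Longrightarrow> independent_set E' A"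
  unfolding independent_set_def adj_def by blast

lemma independent_set_insert:
  "independent_set E (insert a A) \<longleftrightarrow> independent_set E A \<and> (\<forall>b\<in>A. \<not> adj E a b)"
  unfolding independent_set_def by (auto simp: adj_commute)

lemma independent_set_pair: "\<not> adj E a b \<Longrightarrow> independent_set E {a, b}"
  by (simp add: independent_set_insert independent_set_def adj_commute)

lemma proper_subgraph_del_vertex:
  assumes "graph V E" "x \<in> V"
  shows "proper_subgraph (V - {x}) (del_vertex_edges E x) V E"
  using assms unfolding proper_subgraph_def subgraph_def graph_def del_vertex_edges_def by blast

lemma proper_subgraph_cases:
  assumes "proper_subgraph V' E' V E"
  obtains x where "x \<in> V" "V' \<subseteq> V - {x}" "E' \<subseteq> del_vertex_edges E x"
    | e where "e \<in> E" "V' = V" "E' \<subseteq> E - {e}"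
proof -
  have sub: "graph V' E'" "V' \<subseteq> V" "E' \<subseteq> E" and ne: "(V', E') \<noteq> (V, E)"
    using assms unfolding proper_subgraph_def subgraph_def by blast+
  show thesis
  proof (cases "V' = V")
    case False
    with sub(2) obtain x where x: "x \<in> V" "x \<notin> V'"
      by blast
    have "E' \<subseteq> del_vertex_edges E x"
    proof
      fix e assume "e \<in> E'"
      with sub(1) obtain p q where "e = {p, q}" "p \<in> V'" "q \<in> V'"
        unfolding graph_def by blast
      with x(2) sub(3) \<open>e \<in> E'\<close> show "e \<in> del_vertex_edges E x"
        unfolding del_vertex_edges_def by auto
    qed
    with that(1) x sub(2) show thesis
      by blast
  next
    case True
    with ne sub(3) obtain e where "e \<in> E" "e \<notin> E'"
      by blast
    with that(2) True sub(3) show thesis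
      by blast
  qed
qed

lemma gdist_le_enat_iff: "gdist V E u w \<le> enat n \<longleftrightarrow> (\<exists>k\<le>n. (adj E ^^ k) u w)"
proof
  assume le: "gdist V E u w \<le> enat n"
  then have ex: "\<exists>k. (adj E ^^ k) u w"
    unfolding gdist_def by (auto split: if_splits)
  then have "(LEAST k. (adj E ^^ k) u w) \<le> n"
    using le unfolding gdist_def by simp
  with LeastI_ex[OF ex] show "\<exists>k\<le>n. (adj E ^^ k) u w"
    by blast
next
  assume "\<exists>k\<le>n. (adj E ^^ k) u w"
  then obtain k where k: "k \<le> n" "(adj E ^^ k) u w"
    by blast
  then have "(LEAST k. (adj E ^^ k) u w) \<le> n"
    using Least_le[of "\<lambda>k. (adj E ^^ k) u w"] le_trans by blast
  with k(2) show "gdist V E u w \<le> enat n"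
    unfolding gdist_def by auto
qed

lemma gdist_le_1_iff: "gdist V E u w \<le> enat 1 \<longleftrightarrow> u = w \<or> adj E u w"
proof -
  have "(\<exists>k\<le>1. (adj E ^^ k) u w) \<longleftrightarrow> (adj E ^^ 0) u w \<or> (adj E ^^ 1) u w"
    by (metis le_Suc_eq le_zero_eq One_nat_def)
  then show ?thesis
    unfolding gdist_le_enat_iff relpowp_1 by simp
qed

lemma gdist_le_2_iff:
  "gdist V E u w \<le> enat 2 \<longleftrightarrow> u = w \<or> adj E u w \<or> (\<exists>m. adj E u m \<and> adj E m w)"
proof -
  have "(\<exists>k\<le>2. (adj E ^^ k) u w) \<longleftrightarrow> (adj E ^^ 0) u w \<or> (adj E ^^ 1) u w \<or> (adj E ^^ 2) u w"
    by (metis le_Suc_eq le_zero_eq One_nat_def numeral_2_eq_2)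
  moreover have "(adj E ^^ 2) u w \<longleftrightarrow> (\<exists>m. adj E u m \<and> adj E m w)"
    by (auto simp: numeral_2_eq_2 relpowp_Suc_left)
  ultimately show ?thesis
    unfolding gdist_le_enat_iff relpowp_1 by simp
qed

lemma gdist_le_2_if_universal:
  assumes "\<And>y. y \<in> V \<Longrightarrow> y \<noteq> v \<Longrightarrow> adj E v y" "p \<in> V" "q \<in> V"
  shows "gdist V E p q \<le> enat 2"
  unfolding gdist_le_2_iff using assms adj_commute by metis

lemma gdist_le_diameter: "u \<in> V \<Longrightarrow> w \<in> V \<Longrightarrow> gdist V E u w \<le> diameter V E"
  unfolding diameter_def by (auto intro: Sup_upper)

lemma diameter_le_1_if_complete:
  assumes "complete_graph V E"
  shows "diameter V E \<le> enat 1"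
proof -
  have "gdist V E u w \<le> enat 1" if "u \<in> V" "w \<in> V" for u w
    using assms that unfolding gdist_le_1_iff complete_graph_def adj_def by blast
  then show ?thesis
    unfolding diameter_def by (blast intro: Sup_least)
qed

lemma walk_if_gdist_le_2:
  assumes "gdist V E p q \<le> enat 2" "p \<noteq> q"
  obtains zs where "successively (adj E) (p # zs @ [q])"
    "zs = [] \<or> (\<exists>m. zs = [m] \<and> adj E p m \<and> adj E m q)"
proof -
  from assms consider "adj E p q" | m where "adj E p m" "adj E m q"
    unfolding gdist_le_2_iff by blast
  then show thesis
  proof cases
    case 1
    then show thesis using that[of "[]"] by simp
  next
    case 2
    then show thesis using that[of "[m]"] by simp
  qed
qed

lemma successively_rtranclp_hd: "successively R xs \<Longrightarrow> x \<in> set xs \<Longrightarrow> R\<^sup>*\<^sup>* (hd xs) x"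
  by (induction xs rule: induct_list012) (auto intro: converse_rtranclp_into_rtranclp)

lemma successively_adj_rtranclp:
  assumes "successively (adj E) xs" "u \<in> set xs" "w \<in> set xs"
  shows "(adj E)\<^sup>*\<^sup>* u w"
proof -
  have "symp (adj E)\<^sup>*\<^sup>*"
    by (rule symp_rtranclp) (auto intro: sympI simp: adj_commute)
  then have "(adj E)\<^sup>*\<^sup>* u (hd xs)"
    using successively_rtranclp_hd[OF assms(1,2)] by (rule sympD)
  then show ?thesis
    using successively_rtranclp_hd[OF assms(1,3)] by simp
qed

lemma conn_no_cut_if_hamiltonian_cycle:
  assumes "distinct xs" "xs \<noteq> []" "set xs = S" "successively (adj F) (xs @ [hd xs])"
  shows "conn_no_cut S F"
proof -
  have connected: "(adj F)\<^sup>*\<^sup>* u w" if "u \<in> S" "w \<in> S" for u w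
    using successively_adj_rtranclp[of F xs] assms that by (simp add: successively_append_iff)
  have no_cut: "(adj (del_vertex_edges F x))\<^sup>*\<^sup>* u w"
    if "x \<in> S" "u \<in> S - {x}" "w \<in> S - {x}" for x u w
  proof -
    obtain ys zs where xs: "xs = ys @ x # zs"
      using \<open>x \<in> S\<close> assms(3) split_list by fastforce
    have "successively (adj F) (ys @ x # zs @ [hd xs])"
      using assms(4) xs by simp
    then have "successively (adj F) ys" "successively (adj F) (zs @ [hd xs])"
      by (simp_all add: successively_append_iff successively_Cons)
    moreover have "hd xs = hd ys" if "ys \<noteq> []"
      using xs that by simp
    ultimately have "successively (adj F) (zs @ ys)"
      by (force simp: successively_append_iff)
    moreover have "x \<notin> set (zs @ ys)"
      using assms(1) xs by auto
    ultimately have "successively (adj (del_vertex_edges F x)) (zs @ ys)"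
      by (auto elim: successively_mono simp: adj_del_vertex_edges)
    moreover have "set (zs @ ys) = S - {x}"
      using assms(1,3) xs by auto
    ultimately show ?thesis
      using successively_adj_rtranclp that(2,3) by metis
  qed
  have "S \<noteq> {}"
    using assms(2,3) by auto
  with connected no_cut show ?thesis
    unfolding conn_no_cut_def connected_graph_def cut_vertex_def reachable_def by simp
qed

lemma finite_subgraphs:
  assumes "finite V"
  shows "finite {(B, F). subgraph B F V E}"
proof (rule finite_subset)
  show "{(B, F). subgraph B F V E} \<subseteq> Pow V \<times> Pow (Pow V)"
  proof clarify
    fix B F assume sub: "subgraph B F V E"
    have "e \<in> Pow V" if "e \<in> F" for e
    proof -
      obtain p q where "e = {p, q}" "p \<in> B" "q \<in> B" "B \<subseteq> V"
        using sub \<open>e \<in> F\<close> unfolding subgraph_def graph_def by blast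
      then show ?thesis
        by blast
    qed
    with sub show "B \<in> Pow V \<and> F \<in> Pow (Pow V)"
      unfolding subgraph_def by blast
  qed
qed (simp add: assms)

lemma ex_block_containing:
  assumes V: "finite V" and sub: "subgraph S F V E" and S: "conn_no_cut S F"
  obtains B FB where "is_block B FB V E" "S \<subseteq> B" "F \<subseteq> FB"
proof -
  define P where "P = {(B, FB). subgraph B FB V E \<and> conn_no_cut B FB \<and> S \<subseteq> B \<and> F \<subseteq> FB}"
  have "finite P"
    by (rule finite_subset[OF _ finite_subgraphs[OF V]]) (auto simp: P_def)
  moreover have "(S, F) \<in> P"
    unfolding P_def using sub S by simp
  ultimately obtain m where m: "m \<in> P" "(S, F) \<le> m" "\<And>p. p \<in> P \<Longrightarrow> m \<le> p \<Longrightarrow> m = p"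
    using finite_has_maximal2[of P "(S, F)"] by blast
  obtain B FB where mB: "m = (B, FB)"
    by (cases m)
  note max = m[unfolded mB]
  have "is_block B FB V E"
    unfolding is_block_def
  proof (intro conjI allI impI)
    show "subgraph B FB V E" "conn_no_cut B FB"
      using max(1) unfolding P_def by auto
  next
    fix B' F' assume B': "subgraph B' F' V E \<and> conn_no_cut B' F' \<and> B \<subseteq> B' \<and> FB \<subseteq> F'"
    then have "(B', F') \<in> P"
      using max(1,2) unfolding P_def by (auto simp: less_eq_prod_def)
    moreover have "(B, FB) \<le> (B', F')"
      using B' by (simp add: less_eq_prod_def)
    ultimately have "(B, FB) = (B', F')"
      by (rule max(3))
    then show "B' = B" "F' = FB"
      by simp_all
  qed
  moreover have "S \<subseteq> B" "F \<subseteq> FB"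
    using max(2) by (simp_all add: less_eq_prod_def)
  ultimately show thesis
    by (rule that)
qed

lemma subgraph_induced:
  assumes "graph V E" "S \<subseteq> V"
  shows "subgraph S {e \<in> E. e \<subseteq> S} V E"
  unfolding subgraph_def graph_def
proof (intro conjI ballI)
  show "finite S"
    using assms finite_subset unfolding graph_def by blast
next
  fix e assume "e \<in> {e \<in> E. e \<subseteq> S}"
  moreover obtain p q where "e = {p, q}" "p \<noteq> q"
    using assms(1) calculation unfolding graph_def by blast
  ultimately show "\<exists>p q. e = {p, q} \<and> p \<noteq> q \<and> p \<in> S \<and> q \<in> S"
    by blast
qed (use assms(2) in auto)

lemma graph_if_block_graph: "block_graph V E \<Longrightarrow> graph V E"
  unfolding block_graph_def by blast

lemma block_graph_adj_if_conn_no_cut: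
  assumes bg: "block_graph V E" and sub: "subgraph S F V E" and S: "conn_no_cut S F"
    and uw: "u \<in> S" "w \<in> S" "u \<noteq> w"
  shows "adj E u w"
proof -
  have "finite V"
    using graph_if_block_graph[OF bg] unfolding graph_def by blast
  then obtain B FB where B: "is_block B FB V E" "S \<subseteq> B" "F \<subseteq> FB"
    by (rule ex_block_containing[OF _ sub S])
  have "complete_graph B FB"
    using bg B(1) unfolding block_graph_def by blast
  moreover have "subgraph B FB V E"
    using B(1) unfolding is_block_def by (rule conjunct1)
  then have "FB \<subseteq> E"
    unfolding subgraph_def by blast
  ultimately show ?thesis
    using B(2) uw unfolding complete_graph_def adj_def by blast
qed

text \<open>The subgraph induced by a cycle is 2-connected, hence contained in a block.\<close>

lemma block_graph_adj_if_cycle: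
  assumes bg: "block_graph V E" and xs: "distinct xs" "successively (adj E) (xs @ [hd xs])"
    and uw: "u \<in> set xs" "w \<in> set xs" "u \<noteq> w"
  shows "adj E u w"
proof -
  define F where "F = {e \<in> E. e \<subseteq> set xs}"
  have "set xs \<subseteq> V"
  proof
    fix x assume "x \<in> set xs"
    then obtain ys zs where "xs = ys @ x # zs"
      by (meson split_list)
    with xs(2) have "adj E x (hd (zs @ [hd xs]))"
      by (simp add: successively_append_iff successively_Cons)
    then show "x \<in> V"
      using adj_in_vertices[OF graph_if_block_graph[OF bg]] by blast
  qed
  then have "subgraph (set xs) F V E"
    unfolding F_def by (rule subgraph_induced[OF graph_if_block_graph[OF bg]])
  moreover have "xs \<noteq> []"
    using uw by auto
  then have "conn_no_cut (set xs) F"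
  proof (rule conn_no_cut_if_hamiltonian_cycle[OF xs(1) _ refl])
    show "successively (adj F) (xs @ [hd xs])"
      using xs(2) by (rule successively_mono) (use \<open>xs \<noteq> []\<close> in \<open>auto simp: F_def adj_def\<close>)
  qed
  ultimately show ?thesis
    by (rule block_graph_adj_if_conn_no_cut[OF bg _ _ uw])
qed

lemma block_graph_adj_if_common_neighbour:
  assumes bg: "block_graph V E" and v: "\<And>y. y \<in> V \<Longrightarrow> y \<noteq> v \<Longrightarrow> adj E v y"
    and path: "adj E x y" "adj E y z" and ne: "x \<noteq> z" "x \<noteq> v" "y \<noteq> v" "z \<noteq> v"
  shows "adj E x z"
proof -
  have g: "graph V E"
    using graph_if_block_graph[OF bg] .
  have "distinct [x, y, z, v]"
    using path ne by auto
  moreover have "adj E z v" "adj E v x"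
    using path ne v adj_in_vertices[OF g] adj_commute by metis+
  then have "successively (adj E) ([x, y, z, v] @ [hd [x, y, z, v]])"
    using path by simp
  ultimately show ?thesis
    using block_graph_adj_if_cycle[OF bg, of "[x, y, z, v]" x z] ne(1) by simp
qed

text \<open>If v were not adjacent to y, the walks of length at most 2 from y to u and from w to y,
  joined by u, v, w, would close a cycle through the non-adjacent vertices u and w.\<close>

lemma block_graph_common_neighbour_universal:
  assumes bg: "block_graph V E" and d2: "\<And>p q. p \<in> V \<Longrightarrow> q \<in> V \<Longrightarrow> gdist V E p q \<le> enat 2"
    and uw: "u \<noteq> w" "\<not> adj E u w" and v: "adj E u v" "adj E v w" and y: "y \<in> V" "y \<noteq> v"
  shows "adj E v y"
proof (rule ccontr)
  assume nvy: "\<not> adj E v y"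
  have V: "u \<in> V" "w \<in> V"
    using v adj_in_vertices[OF graph_if_block_graph[OF bg]] by blast+
  have yu: "y \<noteq> u" and yw: "y \<noteq> w"
    using v nvy adj_commute by metis+
  obtain p1 where p1: "successively (adj E) (y # p1 @ [u])"
    "p1 = [] \<or> (\<exists>z. p1 = [z] \<and> adj E y z \<and> adj E z u)"
    using walk_if_gdist_le_2[OF d2[OF y(1) V(1)] yu] by blast
  obtain p2 where p2: "successively (adj E) (w # p2 @ [y])"
    "p2 = [] \<or> (\<exists>z. p2 = [z] \<and> adj E w z \<and> adj E z y)"
    using walk_if_gdist_le_2[OF d2[OF V(2) y(1)] yw[symmetric]] by blast
  have "successively (adj E) ((y # p1 @ [u]) @ [v] @ (w # p2 @ [y]))"
    using p1(1) p2(1) v unfolding successively_append_iff by simp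
  then have cycle: "successively (adj E) (y # p1 @ [u, v] @ w # p2 @ [y])"
    by simp
  have p1_set: "z \<notin> {y, u, v, w}" if "z \<in> set p1" for z
    using that p1(2) uw(2) nvy by (auto simp: adj_commute)
  have p2_set: "z \<notin> {y, u, v, w}" if "z \<in> set p2" for z
    using that p2(2) uw(2) nvy by (auto simp: adj_commute)
  show False
  proof (cases "set p1 \<inter> set p2 = {}")
    case True
    have "distinct (y # p1 @ [u, v] @ w # p2)"
      using p1_set p2_set p1(2) p2(2) True uw(1) yu yw y(2) v by auto
    with cycle show False
      using block_graph_adj_if_cycle[OF bg, of "y # p1 @ [u, v] @ w # p2" u w] uw by simp
  next
    case False
    then obtain z where "p1 = [z]" "p2 = [z]" "adj E z u" "adj E w z"
      using p1(2) p2(2) by auto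
    moreover have "distinct [z, u, v, w]"
      using p1_set[of z] v uw(1) calculation(1) by auto
    ultimately show False
      using block_graph_adj_if_cycle[OF bg, of "[z, u, v, w]" u w] uw v by simp
  qed
qed

lemma block_graph_universal_vertex:
  assumes bg: "block_graph V E" and d2: "\<And>p q. p \<in> V \<Longrightarrow> q \<in> V \<Longrightarrow> gdist V E p q \<le> enat 2"
    and "\<not> complete_graph V E"
  obtains v where "v \<in> V" "\<And>y. y \<in> V \<Longrightarrow> y \<noteq> v \<Longrightarrow> adj E v y"
proof -
  obtain u w where uw: "u \<in> V" "w \<in> V" "u \<noteq> w" "\<not> adj E u w"
    using assms(3) unfolding complete_graph_def adj_def by blast
  then obtain v where v: "adj E u v" "adj E v w"
    using d2[OF uw(1,2)] unfolding gdist_le_2_iff by blast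
  have "v \<in> V"
    using adj_in_vertices[OF graph_if_block_graph[OF bg] v(1)] by blast
  then show thesis
    using that block_graph_common_neighbour_universal[OF bg d2 uw(3,4) v] by blast
qed

lemma gdist_antimono:
  assumes "E' \<subseteq> E"
  shows "gdist V E u w \<le> gdist V' E' u w"
proof (cases "gdist V' E' u w")
  case (enat n)
  then obtain k where "k \<le> n" "(adj E' ^^ k) u w"
    using gdist_le_enat_iff[of V' E' u w n] by auto
  moreover have "(adj E ^^ k) u w"
    by (rule relpowp_mono[OF _ \<open>(adj E' ^^ k) u w\<close>]) (rule adj_mono[OF _ assms])
  ultimately show ?thesis
    using enat gdist_le_enat_iff[of V E u w n] by auto
qed simp

lemma packing_coloring_mono:
  assumes "packing_coloring V E k c" "V' \<subseteq> V" "E' \<subseteq> E"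
  shows "packing_coloring V' E' k c"
proof -
  have "enat (c u) < gdist V' E' u w" if "u \<in> V'" "w \<in> V'" "u \<noteq> w \<and> c u = c w" for u w
  proof -
    have "enat (c u) < gdist V E u w"
      using assms(1,2) that unfolding packing_coloring_def by blast
    also have "\<dots> \<le> gdist V' E' u w"
      by (rule gdist_antimono[OF assms(3)])
    finally show ?thesis .
  qed
  then show ?thesis
    using assms(1,2) unfolding packing_coloring_def by blast
qed

lemma packing_chromatic_le: "packing_coloring V E k c \<Longrightarrow> packing_chromatic V E \<le> k"
  unfolding packing_chromatic_def by (auto intro: Least_le)

lemma ex_packing_coloring_independent_far:
  assumes V: "finite V" "A \<subseteq> V" "B \<subseteq> V" "A \<inter> B = {}"
    and A: "independent_set E A"
    and B: "\<And>u w. u \<in> B \<Longrightarrow> w \<in> B \<Longrightarrow> u \<noteq> w \<Longrightarrow> enat 2 < gdist V E u w"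
  shows "\<exists>c. packing_coloring V E (2 + card (V - A - B)) c"
proof -
  define R where "R = V - A - B"
  obtain h where h: "bij_betw h R {0..<card R}"
    using ex_bij_betw_finite_nat[of R] V(1) unfolding R_def by blast
  define c where "c u = (if u \<in> A then 1 else if u \<in> B then 2 else 3 + h u)" for u
  have "packing_coloring V E (2 + card R) c"
    unfolding packing_coloring_def
  proof (intro conjI ballI impI)
    fix u assume "u \<in> V"
    then have "u \<notin> A \<Longrightarrow> u \<notin> B \<Longrightarrow> h u < card R"
      using h unfolding R_def bij_betw_def by auto
    then show "c u \<in> {1..2 + card R}"
      unfolding c_def by auto
  next
    fix u w assume uw: "u \<in> V" "w \<in> V" "u \<noteq> w \<and> c u = c w"
    consider "u \<in> A" "w \<in> A" | "u \<in> B" "w \<in> B" "c u = 2" | "u \<in> R" "w \<in> R" "h u = h w"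
      using uw V(4) unfolding c_def R_def by (auto split: if_splits)
    then show "enat (c u) < gdist V E u w"
    proof cases
      case 1
      then have "\<not> gdist V E u w \<le> enat 1"
        using A uw(3) unfolding independent_set_def gdist_le_1_iff by blast
      then show ?thesis
        using 1 unfolding c_def by simp
    next
      case 2
      then show ?thesis
        using B uw(3) by simp
    next
      case 3
      then show ?thesis
        using h uw(3) unfolding bij_betw_def inj_on_def by blast
    qed
  qed
  then show ?thesis
    unfolding R_def by blast
qed

lemma ex_packing_coloring_independent:
  assumes V: "finite V" "A \<subseteq> V" and A: "independent_set E A"
  shows "\<exists>c. packing_coloring V E (1 + card (V - A)) c"
proof (cases "V = A")
  case True
  have "\<not> gdist V E u w \<le> enat 1" if "u \<in> V" "w \<in> V" "u \<noteq> w" for u w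
    using A True that unfolding independent_set_def gdist_le_1_iff by blast
  then have "packing_coloring V E 1 (\<lambda>_. 1)"
    unfolding packing_coloring_def by (simp add: not_le)
  with True show ?thesis
    by auto
next
  case False
  then obtain b where b: "b \<in> V - A"
    using V(2) by blast
  then have "2 + card (V - A - {b}) = 1 + card (V - A)"
    using V(1) card_Suc_Diff1[of "V - A" b] by simp
  then show ?thesis
    using ex_packing_coloring_independent_far[OF V(1,2) _ _ A, of "{b}"] b by auto
qed

lemma packing_chromatic_le_independent:
  assumes "finite V" "A \<subseteq> V" "independent_set E A"
  shows "packing_chromatic V E + card A \<le> card V + 1"
proof -
  have "packing_chromatic V E \<le> 1 + card (V - A)"
    using ex_packing_coloring_independent[OF assms] packing_chromatic_le by blast
  moreover have "card (V - A) = card V - card A" "card A \<le> card V"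
    using assms(1,2) finite_subset[OF assms(2,1)] by (simp_all add: card_Diff_subset card_mono)
  ultimately show ?thesis
    by linarith
qed

lemma packing_chromatic_le_independent_far:
  assumes "finite V" "A \<subseteq> V" "B \<subseteq> V" "A \<inter> B = {}" "independent_set E A"
    and "\<And>u w. u \<in> B \<Longrightarrow> w \<in> B \<Longrightarrow> u \<noteq> w \<Longrightarrow> enat 2 < gdist V E u w"
  shows "packing_chromatic V E + card A + card B \<le> card V + 2"
proof -
  obtain c where "packing_coloring V E (2 + card (V - A - B)) c"
    using ex_packing_coloring_independent_far[OF assms] by blast
  then have "packing_chromatic V E \<le> 2 + card (V - A - B)"
    by (rule packing_chromatic_le)
  moreover have "V - A - B = V - (A \<union> B)"
    by blast
  moreover have "finite A" "finite B"
    using finite_subset[OF assms(2,1)] finite_subset[OF assms(3,1)] .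
  then have "card (A \<union> B) = card A + card B" "card (V - (A \<union> B)) = card V - card (A \<union> B)"
    using assms(1-4) by (simp_all add: card_Un_disjoint card_Diff_subset)
  moreover have "card (A \<union> B) \<le> card V"
    using assms(1-3) by (intro card_mono) auto
  ultimately show ?thesis
    by simp
qed

lemma ex_packing_coloring_packing_chromatic:
  assumes "finite V"
  shows "\<exists>c. packing_coloring V E (packing_chromatic V E) c"
proof -
  have "\<exists>k c. packing_coloring V E k c"
    using ex_packing_coloring_independent[OF assms, of "{}" E] by (auto simp: independent_set_def)
  then show ?thesis
    unfolding packing_chromatic_def by (rule LeastI_ex)
qed

lemma packing_chromatic_mono:
  assumes "finite V" "V' \<subseteq> V" "E' \<subseteq> E"
  shows "packing_chromatic V' E' \<le> packing_chromatic V E"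
  using ex_packing_coloring_packing_chromatic[OF assms(1)] packing_coloring_mono[OF _ assms(2,3)]
    packing_chromatic_le by metis

lemma independent_set_packing_colour_1:
  assumes "packing_coloring V E k c"
  shows "independent_set E {u \<in> V. c u = 1}"
  unfolding independent_set_def
proof (intro ballI notI)
  fix u w assume uw: "u \<in> {u \<in> V. c u = 1}" "w \<in> {u \<in> V. c u = 1}" "adj E u w"
  then have "enat 1 < gdist V E u w"
    using assms unfolding packing_coloring_def by fastforce
  with uw(3) show False
    using gdist_le_1_iff[of V E u w] by simp
qed

lemma packing_chromatic_lower_bound:
  assumes V: "finite V" "V \<noteq> {}"
    and d2: "\<And>p q. p \<in> V \<Longrightarrow> q \<in> V \<Longrightarrow> gdist V E p q \<le> enat 2"
  obtains C where "C \<subseteq> V" "independent_set E C" "card V + 1 \<le> packing_chromatic V E + card C"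
proof -
  let ?k = "packing_chromatic V E"
  obtain c where c: "packing_coloring V E ?k c"
    using ex_packing_coloring_packing_chromatic[OF V(1)] by blast
  define C where "C = {u \<in> V. c u = 1}"
  have ind: "independent_set E C"
    unfolding C_def by (rule independent_set_packing_colour_1[OF c])
  have "card (V - C) \<le> card {2..?k}"
  proof (rule card_inj_on_le)
    show "c ` (V - C) \<subseteq> {2..?k}"
      using c unfolding packing_coloring_def C_def by force
    show "inj_on c (V - C)"
    proof (rule inj_onI, rule ccontr)
      fix u w assume uw: "u \<in> V - C" "w \<in> V - C" "c u = c w" "u \<noteq> w"
      then have "enat (c u) < gdist V E u w" "2 \<le> c u"
        using c unfolding packing_coloring_def C_def by force+
      then have "enat 2 < gdist V E u w"
        using order.strict_trans1[of "enat 2" "enat (c u)"] by simp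
      then show False
        using leD[OF d2[of u w]] uw(1,2) by blast
    qed
  qed simp
  moreover have "1 \<le> ?k"
    using c V(2) unfolding packing_coloring_def by force
  moreover have "card (V - C) = card V - card C" "card C \<le> card V"
    using V(1) unfolding C_def by (simp_all add: card_Diff_subset card_mono)
  ultimately have "card V + 1 \<le> ?k + card C"
    by simp
  then show thesis
    using that[OF _ ind] unfolding C_def by blast
qed

lemma independent_set_universal:
  assumes "\<And>y. y \<in> V \<Longrightarrow> y \<noteq> v \<Longrightarrow> adj E v y" "independent_set E C" "C \<subseteq> V" "v \<in> C"
  shows "C = {v}"
proof -
  have "y = v" if "y \<in> C" for y
    using assms(1)[of y] assms(2-4) that unfolding independent_set_def by blast
  with assms(4) show ?thesis
    by blast
qed

lemma ex_adj_neq_if_degree_ge_2: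
  assumes "2 \<le> degree E y"
  shows "\<exists>z. adj E y z \<and> z \<noteq> x"
proof (rule ccontr)
  assume "\<not> ?thesis"
  then have "{z. adj E y z} \<subseteq> {x}"
    by blast
  then have "card {z. adj E y z} \<le> 1"
    using card_mono[of "{x}"] by fastforce
  with assms show False
    unfolding degree_eq_card_adj by simp
qed

locale universal_vertex_graph =
  fixes V :: "'a set" and E :: "'a set set" and v :: 'a
  assumes graph: "graph V E"
    and center_in_V: "v \<in> V"
    and universal: "\<And>y. y \<in> V \<Longrightarrow> y \<noteq> v \<Longrightarrow> adj E v y"
    and not_complete: "\<not> complete_graph V E"
begin

lemma finite_V: "finite V"
  using graph unfolding graph_def by blast

lemma adj_center: "y \<in> V \<Longrightarrow> y \<noteq> v \<Longrightarrow> adj E y v"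
  using universal adj_commute by metis

lemma obtain_nonadjacent:
  obtains u w where "u \<in> V" "w \<in> V" "u \<noteq> w" "\<not> adj E u w" "u \<noteq> v" "w \<noteq> v"
proof -
  obtain u w where uw: "u \<in> V" "w \<in> V" "u \<noteq> w" "\<not> adj E u w"
    using not_complete unfolding complete_graph_def adj_def by blast
  moreover have "u \<noteq> v" "w \<noteq> v"
    using uw universal adj_center by metis+
  ultimately show thesis
    using that by blast
qed

lemma packing_chromatic_less_card:
  assumes "E' \<subseteq> E"
  shows "packing_chromatic V E' < card V"
proof -
  obtain u w where uw: "u \<in> V" "w \<in> V" "u \<noteq> w" "\<not> adj E u w"
    using obtain_nonadjacent by blast
  then have "\<not> adj E' u w"
    using adj_mono[OF _ assms] by metis
  then have "packing_chromatic V E' + card {u, w} \<le> card V + 1"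
    using packing_chromatic_le_independent[OF finite_V _ independent_set_pair] uw(1,2) by blast
  with uw(3) show ?thesis
    by simp
qed

lemma finite_adj: "finite {u. adj E x u}"
proof (rule finite_subset[OF _ finite_V])
  show "{u. adj E x u} \<subseteq> V"
    using adj_in_vertices[OF graph] by blast
qed

lemma degree_center_ge_2: "2 \<le> degree E v"
proof -
  obtain u w where uw: "u \<in> V" "w \<in> V" "u \<noteq> w" "u \<noteq> v" "w \<noteq> v"
    using obtain_nonadjacent by metis
  then have "{u, w} \<subseteq> {y. adj E v y}"
    using universal by blast
  then have "card {u, w} \<le> degree E v"
    unfolding degree_eq_card_adj by (rule card_mono[OF finite_adj])
  with uw(3) show ?thesis
    by simp
qed

lemma adj_eq_center_if_degree_lt_2:
  assumes x: "x \<in> V" "degree E x < 2" and u: "adj E x u"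
  shows "u = v"
proof (rule ccontr)
  assume "u \<noteq> v"
  have "x \<noteq> v"
    using x(2) degree_center_ge_2 by auto
  then have "{u, v} \<subseteq> {y. adj E x y}"
    using u adj_center[OF x(1)] by blast
  then have "card {u, v} \<le> degree E x"
    unfolding degree_eq_card_adj by (rule card_mono[OF finite_adj])
  with x(2) \<open>u \<noteq> v\<close> show False
    by simp
qed

lemma packing_chromatic_del_vertex_lower_bound:
  assumes x: "x \<in> V" "x \<noteq> v"
  obtains C where "C \<subseteq> V - {x}" "independent_set E C"
    "card V \<le> packing_chromatic (V - {x}) (del_vertex_edges E x) + card C"
proof -
  define V' where "V' = V - {x}"
  define E' where "E' = del_vertex_edges E x"
  have v': "v \<in> V'"
    using center_in_V x unfolding V'_def by blast
  have univ': "adj E' v y" if "y \<in> V'" "y \<noteq> v" for y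
    using universal that x unfolding V'_def E'_def adj_del_vertex_edges by blast
  have "finite V'"
    using finite_V unfolding V'_def by blast
  then obtain C where C: "C \<subseteq> V'" "independent_set E' C"
    "card V' + 1 \<le> packing_chromatic V' E' + card C"
    using packing_chromatic_lower_bound[of V' E'] gdist_le_2_if_universal[OF univ'] v' by auto
  moreover have "independent_set E C"
    using C(1,2) unfolding independent_set_def V'_def E'_def adj_del_vertex_edges by blast
  moreover have "card V' + 1 = card V"
    using card_Suc_Diff1[OF finite_V x(1)] unfolding V'_def by simp
  ultimately show thesis
    using that unfolding V'_def E'_def by simp
qed

lemma degree_ge_2_if_packing_critical:
  assumes crit: "packing_critical V E" and x: "x \<in> V"
  shows "2 \<le> degree E x"
proof (rule ccontr)
  assume "\<not> 2 \<le> degree E x"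
  then have only: "u = v" if "adj E x u" for u
    using adj_eq_center_if_degree_lt_2[OF x _ that] by simp
  have xv: "x \<noteq> v"
    using \<open>\<not> 2 \<le> degree E x\<close> degree_center_ge_2 by blast
  let ?k = "packing_chromatic (V - {x}) (del_vertex_edges E x)"
  have lt: "?k < packing_chromatic V E"
    using crit proper_subgraph_del_vertex[OF graph x] unfolding packing_critical_def by blast
  obtain C where C: "C \<subseteq> V - {x}" "independent_set E C" "card V \<le> ?k + card C"
    using packing_chromatic_del_vertex_lower_bound[OF x xv] by blast
  show False
  proof (cases "v \<in> C")
    case True
    then have "C = {v}"
      using independent_set_universal[OF universal C(2)] C(1) by blast
    then show False
      using C(3) lt packing_chromatic_less_card[OF order_refl] by simp
  next
    case False
    have "insert x C \<subseteq> V"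
      using C(1) x by blast
    moreover have "independent_set E (insert x C)"
      using C(2) only False unfolding independent_set_insert by blast
    ultimately have "packing_chromatic V E + card (insert x C) \<le> card V + 1"
      by (rule packing_chromatic_le_independent[OF finite_V])
    moreover have "x \<notin> C" "finite C"
      using C(1) finite_subset[OF _ finite_V] by auto
    then have "card (insert x C) = card C + 1"
      by simp
    ultimately show False
      using C(3) lt by simp
  qed
qed

end

text \<open>All blocks of such a graph are cliques through the centre v.\<close>

locale generalized_windmill = universal_vertex_graph +
  assumes cluster: "\<And>x y z. adj E x y \<Longrightarrow> adj E y z \<Longrightarrow> x \<noteq> z \<Longrightarrow> x \<noteq> v \<Longrightarrow> y \<noteq> v
    \<Longrightarrow> z \<noteq> v \<Longrightarrow> adj E x z"
begin

lemma eq_or_adj_trans: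
  assumes "x = y \<or> adj E x y" "y = z \<or> adj E y z" "x \<noteq> v" "y \<noteq> v" "z \<noteq> v"
  shows "x = z \<or> adj E x z"
  using assms cluster[of x y z] by blast

lemma closed_neighbourhood_iff: "y \<in> closed_neighbourhood E a \<longleftrightarrow> y = a \<or> adj E y a"
  unfolding closed_neighbourhood_def by (simp add: adj_commute[of E a y])

lemma adj_if_in_closed_neighbourhood:
  assumes "y \<in> closed_neighbourhood E a" "z \<in> closed_neighbourhood E a"
    and "y \<noteq> z" "a \<noteq> v" "y \<noteq> v" "z \<noteq> v"
  shows "adj E y z"
proof -
  have "y = a \<or> adj E y a"
    using assms(1) unfolding closed_neighbourhood_iff .
  moreover have "a = z \<or> adj E a z"
    using assms(2) unfolding closed_neighbourhood_def by blast
  ultimately show ?thesis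
    using eq_or_adj_trans[of y a z] assms(3-6) by blast
qed

lemma not_adj_if_notin_closed_neighbourhood:
  assumes "a' \<in> closed_neighbourhood E a" "a \<noteq> v" "a' \<noteq> v"
    and "z \<noteq> v" "z \<notin> closed_neighbourhood E a"
  shows "\<not> adj E z a'"
proof
  assume "adj E z a'"
  moreover have "a' = a \<or> adj E a' a"
    using assms(1) unfolding closed_neighbourhood_iff .
  ultimately have "z = a \<or> adj E z a"
    using eq_or_adj_trans[of z a' a] assms(2-4) by blast
  with assms(5) show False
    unfolding closed_neighbourhood_iff by blast
qed

lemma closed_neighbourhoods_apart:
  assumes "\<not> adj E a w" "a \<noteq> w" "a \<noteq> v" "w \<noteq> v"
    and "a' \<in> closed_neighbourhood E a" "w' \<in> closed_neighbourhood E w" "a' \<noteq> v" "w' \<noteq> v"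
  shows "a' \<noteq> w' \<and> \<not> adj E a' w'"
proof (rule ccontr)
  assume "\<not> ?thesis"
  then have "a' = w' \<or> adj E a' w'"
    by blast
  moreover have "a = a' \<or> adj E a a'"
    using assms(5) unfolding closed_neighbourhood_def by blast
  moreover have "w' = w \<or> adj E w' w"
    using assms(6) unfolding closed_neighbourhood_iff .
  ultimately have "a = w \<or> adj E a w"
    using eq_or_adj_trans[of a a' w'] eq_or_adj_trans[of a w' w] assms(3,4,7,8) by blast
  with assms(1,2) show False
    by blast
qed

lemma independent_set_exchange:
  assumes C: "independent_set E C" "v \<notin> C" "x \<in> C" and x: "x \<noteq> v" "adj E x x'" "x' \<noteq> v"
  shows "independent_set E (insert x' (C - {x}))"
proof -
  have "\<not> adj E b x'" if "b \<in> C - {x}" for b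
  proof (rule not_adj_if_notin_closed_neighbourhood[OF _ x(1,3)])
    show "x' \<in> closed_neighbourhood E x"
      using x(2) unfolding closed_neighbourhood_def by blast
    show "b \<noteq> v" "b \<notin> closed_neighbourhood E x"
      using that C unfolding closed_neighbourhood_def independent_set_def by auto
  qed
  then show ?thesis
    using independent_set_subset[OF C(1), of "C - {x}"] adj_commute[of E x']
    unfolding independent_set_insert by blast
qed

lemma card_Int_closed_neighbourhood_le_1:
  assumes C: "independent_set E C" "C \<subseteq> V" "v \<notin> C" and a: "a \<noteq> v"
  shows "card (C \<inter> closed_neighbourhood E a) \<le> 1"
proof -
  have fin: "finite (C \<inter> closed_neighbourhood E a)"
    by (rule finite_subset[OF _ finite_V]) (use C(2) in auto)
  have "y = z" if "y \<in> C \<inter> closed_neighbourhood E a" "z \<in> C \<inter> closed_neighbourhood E a" for y z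
  proof (rule ccontr)
    assume "y \<noteq> z"
    moreover have "y \<noteq> v" "z \<noteq> v"
      using C(3) that by auto
    ultimately have "adj E y z"
      using adj_if_in_closed_neighbourhood[of y a z] that a by blast
    with C(1) that show False
      unfolding independent_set_def by blast
  qed
  then show ?thesis
    unfolding One_nat_def card_le_Suc0_iff_eq[OF fin] by blast
qed

lemma card_le_card_Diff_closed_neighbourhood:
  assumes C: "independent_set E C" "C \<subseteq> V" "v \<notin> C" and a: "a \<noteq> v"
  shows "card C \<le> card (C - closed_neighbourhood E a) + 1"
  using card_Int_Diff[OF finite_subset[OF C(2) finite_V], of "closed_neighbourhood E a"]
    card_Int_closed_neighbourhood_le_1[OF C a] by linarith

lemma ex_non_neighbour:
  assumes "a \<in> V" "a \<noteq> v"
  obtains w where "w \<in> V" "w \<noteq> v" "w \<noteq> a" "\<not> adj E a w"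
proof -
  obtain u w where uw: "u \<in> V" "w \<in> V" "u \<noteq> w" "\<not> adj E u w" "u \<noteq> v" "w \<noteq> v"
    using obtain_nonadjacent by blast
  have "u \<notin> closed_neighbourhood E a \<or> w \<notin> closed_neighbourhood E a"
    using adj_if_in_closed_neighbourhood[of u a w] uw assms(2) by blast
  then show thesis
    using that uw unfolding closed_neighbourhood_def by blast
qed

lemma ex_independent_set_avoiding:
  assumes deg: "\<And>y. y \<in> V \<Longrightarrow> 2 \<le> degree E y"
    and C: "independent_set E C" "C \<subseteq> V" and x: "x \<in> V"
  obtains A where "A \<subseteq> V - {x}" "independent_set E A" "card C \<le> card A"
proof -
  consider (outside) "x \<notin> C" | (center) "x = v" "x \<in> C" | (leaf) "x \<noteq> v" "x \<in> C"
    by blast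
  then show thesis
  proof cases
    case outside
    then show thesis
      using that[of C] C by blast
  next
    case center
    then have "C = {v}"
      using independent_set_universal[OF universal C] by blast
    obtain u where "u \<in> V" "u \<noteq> v"
      using obtain_nonadjacent by metis
    moreover have "independent_set E {u}"
      unfolding independent_set_def by simp
    ultimately show thesis
      using that[of "{u}"] \<open>C = {v}\<close> center by simp
  next
    case leaf
    obtain x' where x': "adj E x x'" "x' \<noteq> v"
      using ex_adj_neq_if_degree_ge_2[OF deg[OF x]] by blast
    have "x' \<notin> C" "v \<notin> C"
      using C(1) leaf x'(1) universal[OF x leaf(1)] unfolding independent_set_def by blast+
    have "insert x' (C - {x}) \<subseteq> V - {x}"
      using C(2) adj_in_vertices[OF graph x'(1)] x'(1) by auto
    moreover have "independent_set E (insert x' (C - {x}))"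
      using independent_set_exchange[OF C(1) \<open>v \<notin> C\<close> leaf(2,1) x'] .
    moreover have "card (insert x' (C - {x})) = card C"
      using finite_subset[OF C(2) finite_V] \<open>x' \<notin> C\<close> card_Suc_Diff1[OF _ leaf(2)] by simp
    ultimately show thesis
      using that[of "insert x' (C - {x})"] by simp
  qed
qed

lemma packing_chromatic_del_vertex_le:
  assumes deg: "\<And>y. y \<in> V \<Longrightarrow> 2 \<le> degree E y"
    and C: "independent_set E C" "C \<subseteq> V" and x: "x \<in> V"
  shows "packing_chromatic (V - {x}) (del_vertex_edges E x) + card C \<le> card V"
proof -
  obtain A where A: "A \<subseteq> V - {x}" "independent_set E A" "card C \<le> card A"
    using ex_independent_set_avoiding[OF deg C x] by blast
  have "independent_set (del_vertex_edges E x) A"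
    by (rule independent_set_mono[OF A(2)]) (auto simp: del_vertex_edges_def)
  then have "packing_chromatic (V - {x}) (del_vertex_edges E x) + card A \<le> card (V - {x}) + 1"
    using packing_chromatic_le_independent[of "V - {x}" A] A(1) finite_V by blast
  moreover have "card (V - {x}) + 1 = card V"
    using card_Suc_Diff1[OF finite_V x] by simp
  ultimately show ?thesis
    using A(3) by linarith
qed

lemma ex_independent_set_del_edge:
  assumes C: "independent_set E C" "C \<subseteq> V" "v \<notin> C" and ab: "adj E a b" "a \<noteq> v" "b \<noteq> v"
  obtains A where "A \<subseteq> V" "independent_set (E - {{a, b}}) A" "card C < card A"
proof -
  define R where "R = C - closed_neighbourhood E a"
  have "a \<notin> R" "b \<notin> R" "a \<noteq> b" "finite R"
    using ab(1) finite_subset[OF C(2) finite_V] unfolding R_def closed_neighbourhood_def by auto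
  then have card_A: "card C < card (insert a (insert b R))"
    using card_le_card_Diff_closed_neighbourhood[OF C ab(2)] unfolding R_def by simp
  have "\<not> adj E a z" "\<not> adj E b z" if "z \<in> R" for z
  proof -
    have "z \<noteq> v" "z \<notin> closed_neighbourhood E a" "b \<in> closed_neighbourhood E a"
      using that C(3) ab(1) unfolding R_def closed_neighbourhood_def by auto
    then show "\<not> adj E a z" "\<not> adj E b z"
      using not_adj_if_notin_closed_neighbourhood[of b a z] ab(2,3) adj_commute[of E z b]
      unfolding closed_neighbourhood_def by blast+
  qed
  moreover have "independent_set (E - {{a, b}}) R"
    using independent_set_mono[OF independent_set_subset[OF C(1)], of R] unfolding R_def by blast
  ultimately have "independent_set (E - {{a, b}}) (insert a (insert b R))"
    unfolding independent_set_insert adj_Diff_singleton by blast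
  moreover have "insert a (insert b R) \<subseteq> V"
    using C(2) adj_in_vertices[OF graph ab(1)] unfolding R_def by blast
  ultimately show thesis
    using that card_A by blast
qed

lemma gdist_del_center_edge_gt_2:
  assumes "a \<noteq> v" "w \<noteq> v" "w \<noteq> a" "\<not> adj E a w" "p \<in> {a, w}" "q \<in> {a, w}" "p \<noteq> q"
  shows "enat 2 < gdist V (E - {{v, a}}) p q"
proof -
  let ?E = "E - {{v, a}}"
  have no_mid: "\<not> (adj ?E a m \<and> adj ?E m w)" "\<not> (adj ?E w m \<and> adj ?E m a)" for m
  proof -
    have "\<not> (adj E a m \<and> adj E w m \<and> m \<noteq> v)"
      using closed_neighbourhoods_apart[OF assms(4) assms(3)[symmetric] assms(1,2), of m m]
      unfolding closed_neighbourhood_def by blast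
    then show "\<not> (adj ?E a m \<and> adj ?E m w)" "\<not> (adj ?E w m \<and> adj ?E m a)"
      unfolding adj_Diff_singleton using adj_commute[of E m] by (auto simp: insert_commute)
  qed
  have "\<not> adj ?E a w" "\<not> adj ?E w a"
    using assms(4) adj_commute[of E w a] unfolding adj_Diff_singleton by blast+
  then have "\<not> gdist V ?E a w \<le> enat 2" "\<not> gdist V ?E w a \<le> enat 2"
    unfolding gdist_le_2_iff using no_mid assms(3) by blast+
  then show ?thesis
    using assms(5-7) by (auto simp: not_le)
qed

lemma ex_independent_set_avoiding_nonadjacent:
  assumes deg: "\<And>y. y \<in> V \<Longrightarrow> 2 \<le> degree E y"
    and C: "independent_set E C" "C \<subseteq> V" "v \<notin> C"
    and aw: "a \<in> V" "w \<in> V" "a \<noteq> v" "w \<noteq> v" "w \<noteq> a" "\<not> adj E a w"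
  obtains A where "A \<subseteq> V - {a, w}" "independent_set E A" "card C \<le> card A"
proof -
  obtain a' where a': "adj E a a'" "a' \<noteq> v"
    using ex_adj_neq_if_degree_ge_2[OF deg[OF aw(1)]] by blast
  obtain w' where w': "adj E w w'" "w' \<noteq> v"
    using ex_adj_neq_if_degree_ge_2[OF deg[OF aw(2)]] by blast
  have N: "a \<in> closed_neighbourhood E a" "a' \<in> closed_neighbourhood E a"
    "w \<in> closed_neighbourhood E w" "w' \<in> closed_neighbourhood E w"
    using a'(1) w'(1) unfolding closed_neighbourhood_def by blast+
  have apart: "a' \<noteq> w' \<and> \<not> adj E a' w'" "a' \<noteq> w" "w' \<noteq> a"
    using closed_neighbourhoods_apart[OF aw(6) aw(5)[symmetric] aw(3,4)] N a'(2) w'(2) aw(3,4)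
    by blast+
  define Ca where "Ca = C - closed_neighbourhood E a"
  define R where "R = Ca - closed_neighbourhood E w"
  have Ca: "independent_set E Ca" "Ca \<subseteq> V" "v \<notin> Ca"
    using independent_set_subset[OF C(1)] C(2,3) unfolding Ca_def by auto
  have "a' \<notin> R" "w' \<notin> R" "finite R"
    using N finite_subset[OF C(2) finite_V] unfolding R_def Ca_def by auto
  then have card_A: "card C \<le> card (insert a' (insert w' R))"
    using card_le_card_Diff_closed_neighbourhood[OF C aw(3)]
      card_le_card_Diff_closed_neighbourhood[OF Ca aw(4)] apart(1)
    unfolding R_def Ca_def by simp
  have "\<not> adj E a' z" "\<not> adj E w' z" if "z \<in> R" for z
    using not_adj_if_notin_closed_neighbourhood[OF N(2) aw(3) a'(2), of z]
      not_adj_if_notin_closed_neighbourhood[OF N(4) aw(4) w'(2), of z]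
      adj_commute[of E z a'] adj_commute[of E z w'] that C(3) unfolding R_def Ca_def by auto
  moreover have "independent_set E R"
    by (rule independent_set_subset[OF Ca(1)]) (auto simp: R_def)
  ultimately have "independent_set E (insert a' (insert w' R))"
    using apart(1) unfolding independent_set_insert by blast
  moreover have "insert a' (insert w' R) \<subseteq> V - {a, w}"
    using Ca(2) N adj_in_vertices[OF graph a'(1)] adj_in_vertices[OF graph w'(1)] apart(2,3)
      a'(1) w'(1) unfolding R_def Ca_def by auto
  ultimately show thesis
    using that card_A by blast
qed

lemma packing_chromatic_del_center_edge_le:
  assumes deg: "\<And>y. y \<in> V \<Longrightarrow> 2 \<le> degree E y"
    and C: "independent_set E C" "C \<subseteq> V" "v \<notin> C" and a: "a \<in> V" "a \<noteq> v"
  shows "packing_chromatic V (E - {{v, a}}) + card C \<le> card V"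
proof -
  obtain w where w: "w \<in> V" "w \<noteq> v" "w \<noteq> a" "\<not> adj E a w"
    using ex_non_neighbour[OF a] by blast
  obtain A where A: "A \<subseteq> V - {a, w}" "independent_set E A" "card C \<le> card A"
    using ex_independent_set_avoiding_nonadjacent[OF deg C a(1) w(1) a(2) w(2-4)] by blast
  have "A \<subseteq> V" "{a, w} \<subseteq> V" "A \<inter> {a, w} = {}"
    using A(1) a(1) w(1) by auto
  moreover have "independent_set (E - {{v, a}}) A"
    using independent_set_mono[OF A(2)] by blast
  moreover have "enat 2 < gdist V (E - {{v, a}}) p q" if "p \<in> {a, w}" "q \<in> {a, w}" "p \<noteq> q" for p q
    using gdist_del_center_edge_gt_2[OF a(2) w(2-4) that] .
  ultimately have "packing_chromatic V (E - {{v, a}}) + card A + card {a, w} \<le> card V + 2"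
    by (rule packing_chromatic_le_independent_far[OF finite_V])
  then show ?thesis
    using A(3) w(3) by simp
qed

lemma packing_chromatic_del_edge_le:
  assumes deg: "\<And>y. y \<in> V \<Longrightarrow> 2 \<le> degree E y"
    and C: "independent_set E C" "C \<subseteq> V" and e: "e \<in> E"
  shows "packing_chromatic V (E - {e}) + card C \<le> card V"
proof (cases "v \<in> C")
  case True
  then have "C = {v}"
    using independent_set_universal[OF universal C] by blast
  then show ?thesis
    using packing_chromatic_less_card[of "E - {e}"] by auto
next
  case v_notin_C: False
  obtain a b where "e = {a, b}" "a \<noteq> b"
    using graph e unfolding graph_def by blast
  with e have ab: "e = {a, b}" "adj E a b" "a \<noteq> b"
    unfolding adj_def by simp_all
  show ?thesis
  proof (cases "v \<in> e")
    case True
    define c where "c = (if a = v then b else a)"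
    have "e = {v, c}" "c \<noteq> v" "c \<in> V"
      using True ab adj_in_vertices[OF graph ab(2)] unfolding c_def by auto
    then show ?thesis
      using packing_chromatic_del_center_edge_le[OF deg C v_notin_C] by simp
  next
    case off_center: False
    then obtain A where A: "A \<subseteq> V" "independent_set (E - {e}) A" "card C < card A"
      using ex_independent_set_del_edge[OF C v_notin_C ab(2)] ab(1) by blast
    then have "packing_chromatic V (E - {e}) + card A \<le> card V + 1"
      by (intro packing_chromatic_le_independent[OF finite_V])
    with A(3) show ?thesis
      by linarith
  qed
qed

lemma packing_critical_if_degree_ge_2:
  assumes deg: "\<And>y. y \<in> V \<Longrightarrow> 2 \<le> degree E y"
  shows "packing_critical V E"
  unfolding packing_critical_def
proof (intro allI impI)
  fix V' E' assume sub: "proper_subgraph V' E' V E"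
  have "gdist V E p q \<le> enat 2" if "p \<in> V" "q \<in> V" for p q
    using gdist_le_2_if_universal[OF universal that] .
  then obtain C where C: "C \<subseteq> V" "independent_set E C"
    "card V + 1 \<le> packing_chromatic V E + card C"
    using packing_chromatic_lower_bound[OF finite_V] center_in_V by blast
  have "packing_chromatic V' E' + card C \<le> card V"
    using sub
  proof (cases rule: proper_subgraph_cases)
    case (1 x)
    then have "packing_chromatic V' E' \<le> packing_chromatic (V - {x}) (del_vertex_edges E x)"
      using finite_V by (intro packing_chromatic_mono) auto
    with packing_chromatic_del_vertex_le[OF deg C(2,1) \<open>x \<in> V\<close>] show ?thesis
      by linarith
  next
    case (2 e)
    then have "packing_chromatic V' E' \<le> packing_chromatic V (E - {e})"
      using finite_V by (intro packing_chromatic_mono) auto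
    with packing_chromatic_del_edge_le[OF deg C(2,1) \<open>e \<in> E\<close>] show ?thesis
      by linarith
  qed
  with C(3) show "packing_chromatic V' E' < packing_chromatic V E"
    by linarith
qed

lemma packing_critical_iff_min_degree:
  "packing_critical V E \<longleftrightarrow> 2 \<le> min_degree V E"
proof -
  have "2 \<le> min_degree V E \<longleftrightarrow> (\<forall>y\<in>V. 2 \<le> degree E y)"
    unfolding min_degree_def using finite_V center_in_V by (subst Min_ge_iff) auto
  then show ?thesis
    using degree_ge_2_if_packing_critical packing_critical_if_degree_ge_2 by blast
qed

end

theorem theorem5p1:
  fixes V :: "'a set" and E :: "'a set set"
  assumes "block_graph V E" and "diameter V E = 2"
  shows "packing_critical V E \<longleftrightarrow> min_degree V E \<ge> 2"
proof -
  have d2: "gdist V E p q \<le> enat 2" if "p \<in> V" "q \<in> V" for p q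
    using gdist_le_diameter[OF that, of E] assms(2) by (simp add: numeral_eq_enat)
  have "\<not> complete_graph V E"
    using diameter_le_1_if_complete assms(2) by (force simp: numeral_eq_enat)
  moreover obtain v where v: "v \<in> V" "\<And>y. y \<in> V \<Longrightarrow> y \<noteq> v \<Longrightarrow> adj E v y"
    using block_graph_universal_vertex[OF assms(1) d2 calculation] by blast
  ultimately interpret generalized_windmill V E v
    using assms(1) block_graph_adj_if_common_neighbour[OF assms(1) v(2)]
    by unfold_locales (auto intro: graph_if_block_graph)
  show ?thesis
    by (rule packing_critical_iff_min_degree)
qed

end
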